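(* Let $\tau\in(0,1)$, $(\beta,\gamma,\kappa,\upsilon,C_S,C_{\mathrm{App}})\in(0,1]\times(0,\infty)^2\times(0,1)\times[1,\infty)^2$. Let $P\in\mathcal P_{\mathrm{H\ddot ol}}(\beta,C_S)\cap\mathcal P_{\mathrm{App}}(\mathcal A_{\mathrm{rect}},\tau,\kappa,\gamma,C_{\mathrm{App}})$ be a distribution on $\mathbb R^d\times[0,1]$ with regression function $\eta$ and Lebesgue absolutely continuous marginal $\mu$ having a continuous density $f_\mu$. Suppose $\mathcal X_\tau(\eta)\subseteq\mathcal R_\upsilon(\mu)$, $\mu(\eta^{-1}((\tau,1]))>0$ and $\eta^{-1}(\{\tau\})\neq\emptyset$. Then $\beta\gamma(\kappa-1)\le d\kappa$.
   Context: $\eta(x)=\mathbb E(Y\mid X=x)$; $\mathcal X_c(f):=\{x:f(x)\ge c\}$; $\bar B_\infty,B_\infty$: closed/open sup-norm balls. $\mathcal P_{\mathrm{H\ddot ol}}(\beta,C_S)$ (for $\beta\in(0,1]$): $|\eta(x')-\eta(x)|\le C_S\|x'-x\|^\beta_\infty$ for all $x,x'$. $M_\tau:=\sup\{\mu(A):A\in\mathcal A_{\mathrm{rect}},A\subseteq\mathcal X_\tau(\eta)\}$, with $\mathcal A_{\mathrm{rect}}$ the compact axis-aligned hyper-rectangles. Lower density $\omega(x):=\inf_{r\in(0,1)}\mu(\bar B_\infty(x,r))/r^d$. $\mathcal P_{\mathrm{App}}(\mathcal A_{\mathrm{rect}},\tau,\kappa,\gamma,C_{\mathrm{App}})$: $\sup\{\mu(A):A\in\mathcal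 A_{\mathrm{rect}},A\subseteq\mathcal X_\xi(\omega)\cap\mathcal X_{\tau+\Delta}(\eta)\}\ge M_\tau-C_{\mathrm{App}}(\xi^\kappa+\Delta^\gamma)$ for all $\xi,\Delta>0$. $\mathcal R_\upsilon(\mu):=\bigcap_{r\in(0,1)}\{x:\mu(B_\infty(x,r))\ge\upsilon r^d\sup_{x'\in B_\infty(x,(1+\upsilon)r)}f_\mu(x')\}$. *)

theory Defs
  imports "HOL-Analysis.Analysis" "HOL-Probability.Probability"
begin

definition linf_dist :: "real^'d \<Rightarrow> real^'d \<Rightarrow> real" where
  "linf_dist x y = Max (range (\<lambda>i. \<bar>x$i - y$i\<bar>))"

definition cball_inf :: "real^'d \<Rightarrow> real \<Rightarrow> (real^'d) set" where
  "cball_inf x r = {y. linf_dist x y \<le> r}"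

definition ball_inf :: "real^'d \<Rightarrow> real \<Rightarrow> (real^'d) set" where
  "ball_inf x r = {y. linf_dist x y < r}"

definition superlevel :: "('a \<Rightarrow> real) \<Rightarrow> real \<Rightarrow> 'a set" where
  "superlevel f c = {x. c \<le> f x}"

definition A_rect :: "(real^'d) set set" where
  "A_rect = {cbox a b | a b. \<forall>i. a$i \<le> b$i}"

text \<open>Largest measure of a rectangle inside a set (sup of empty family = 0).\<close>
definition rect_sup :: "(real^'d) measure \<Rightarrow> (real^'d) set \<Rightarrow> ennreal" where
  "rect_sup \<mu> S = Sup {emeasure \<mu> A | A. A \<in> A_rect \<and> A \<subseteq> S}"

definition M_tau :: "(real^'d) measure \<Rightarrow> (real^'d \<Rightarrow> real) \<Rightarrow> real \<Rightarrow> ennreal" where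
  "M_tau \<mu> \<eta> \<tau> = rect_sup \<mu> (superlevel \<eta> \<tau>)"

definition lower_density :: "(real^'d) measure \<Rightarrow> real^'d \<Rightarrow> real" where
  "lower_density \<mu> x = (INF r\<in>{0<..<1}. measure \<mu> (cball_inf x r) / r ^ CARD('d))"

definition Hoelder_class :: "real \<Rightarrow> real \<Rightarrow> (real^'d \<Rightarrow> real) \<Rightarrow> bool" where
  "Hoelder_class \<beta> C_S \<eta> \<longleftrightarrow>
     (\<forall>x x'. \<bar>\<eta> x' - \<eta> x\<bar> \<le> C_S * linf_dist x' x powr \<beta>)"

definition App_class ::
  "(real^'d) measure \<Rightarrow> (real^'d \<Rightarrow> real) \<Rightarrow> real \<Rightarrow> real \<Rightarrow> real \<Rightarrow> real \<Rightarrow> bool" where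
  "App_class \<mu> \<eta> \<tau> \<kappa> \<gamma> C_App \<longleftrightarrow>
     (\<forall>\<xi>>0. \<forall>\<Delta>>0.
        rect_sup \<mu> (superlevel (lower_density \<mu>) \<xi> \<inter> superlevel \<eta> (\<tau> + \<Delta>))
          \<ge> M_tau \<mu> \<eta> \<tau> - ennreal (C_App * (\<xi> powr \<kappa> + \<Delta> powr \<gamma>)))"

text \<open>The set R_upsilon(mu), given the density f of mu.\<close>
definition R_set :: "real \<Rightarrow> (real^'d) measure \<Rightarrow> (real^'d \<Rightarrow> real) \<Rightarrow> (real^'d) set" where
  "R_set \<upsilon> \<mu> f = (\<Inter>r\<in>{0<..<1}.
      {x. measure \<mu> (ball_inf x r)
            \<ge> \<upsilon> * r ^ CARD('d) * (SUP x'\<in>ball_inf x ((1 + \<upsilon>) * r). f x')})"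

text \<open>eta is (a version of) the regression function E(Y | X = x) of P,
  with mu the X-marginal of P.\<close>
definition is_regression_function ::
  "((real^'d) \<times> real) measure \<Rightarrow> (real^'d \<Rightarrow> real) \<Rightarrow> bool" where
  "is_regression_function P \<eta> \<longleftrightarrow>
     \<eta> \<in> borel_measurable borel \<and> (\<forall>x. 0 \<le> \<eta> x \<and> \<eta> x \<le> 1) \<and>
     (\<forall>A\<in>sets borel.
        (\<integral>p. indicator (A \<times> UNIV) p * snd p \<partial>P)
          = (\<integral>x. indicator A x * \<eta> x \<partial>(distr P borel fst)))"

end

(* Let A be a rectangle inside X_{tau+Delta}(eta) on which the lower density is at least xi.
   By Hoelder continuity its delta-enlargement, delta = (Delta/C_S)^(1/beta), still lies in
   X_tau(eta) and so has measure at most M_tau.  The enlargement also contains a ball of radius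
   delta/2 at a corner of A, disjoint from A; since its centre lies in R_upsilon(mu), comparing
   its measure with the density near the corner, where the lower density is at least xi, shows
   that this ball has measure of order delta^d xi.  Hence every such A misses M_tau by that
   much, and the approximation condition forces delta^d xi <~ C_App (xi^kappa + Delta^gamma).
   With xi = Delta^(gamma/kappa) and Delta -> 0 this reads Delta^(d/beta + gamma/kappa) <~
   Delta^gamma, i.e. gamma <= d/beta + gamma/kappa, which is beta gamma (kappa - 1) <= d kappa. *)

theory Submission
  imports Defs
begin

lemma linf_dist_le_iff: "linf_dist x y \<le> r \<longleftrightarrow> (\<forall>i. \<bar>x$i - y$i\<bar> \<le> r)"
  unfolding linf_dist_def by (subst Max_le_iff) auto

lemma linf_dist_less_iff: "linf_dist x y < r \<longleftrightarrow> (\<forall>i. \<bar>x$i - y$i\<bar> < r)"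
  unfolding linf_dist_def by (subst Max_less_iff) auto

lemma linf_dist_nonneg: "0 \<le> linf_dist x y"
  using linf_dist_le_iff[of x y "linf_dist x y"] by (meson abs_ge_zero order_trans order_refl)

lemma linf_dist_self [simp]: "linf_dist x x = 0"
  by (simp add: linf_dist_def)

lemma linf_dist_commute: "linf_dist x y = linf_dist y x"
  unfolding linf_dist_def by (simp add: abs_minus_commute)

lemma ball_inf_eq_box: "ball_inf x r = box (\<chi> i. x$i - r) (\<chi> i. x$i + r)"
  unfolding ball_inf_def by (auto simp: linf_dist_less_iff mem_box_cart abs_less_iff; smt (verit))

lemma cball_inf_eq_cbox: "cball_inf x r = cbox (\<chi> i. x$i - r) (\<chi> i. x$i + r)"
  unfolding cball_inf_def by (auto simp: linf_dist_le_iff mem_box_cart abs_le_iff; smt (verit))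

lemma ball_inf_subset_cball_inf: "ball_inf x r \<subseteq> cball_inf x r"
  unfolding ball_inf_def cball_inf_def by auto

lemma cball_inf_in_A_rect: "0 \<le> r \<Longrightarrow> cball_inf x r \<in> A_rect"
  unfolding cball_inf_eq_cbox A_rect_def
  by (intro CollectI exI[of _ "\<chi> i. x$i - r"] exI[of _ "\<chi> i. x$i + r"]) auto

lemma measure_lborel_cball_inf:
  fixes x :: "real^'d"
  assumes "0 \<le> r"
  shows "measure lborel (cball_inf x r) = (2 * r) ^ CARD('d)"
proof -
  have "cbox (\<chi> i. x$i - r) (\<chi> i. x$i + r) \<noteq> {}"
    using assms by (auto simp: interval_eq_empty_cart)
  from content_cbox_cart[OF this] show ?thesis
    unfolding cball_inf_eq_cbox by simp
qed

lemma Hoelder_class_lower_bound: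
  assumes "Hoelder_class \<beta> C_S \<eta>" "0 \<le> \<beta>" "0 \<le> C_S" "linf_dist y z \<le> \<delta>"
  shows "\<eta> z - C_S * \<delta> powr \<beta> \<le> \<eta> y"
proof -
  have "linf_dist y z powr \<beta> \<le> \<delta> powr \<beta>"
    using assms(2,4) linf_dist_nonneg by (intro powr_mono2) auto
  then have "C_S * linf_dist y z powr \<beta> \<le> C_S * \<delta> powr \<beta>"
    using assms(3) by (rule mult_left_mono)
  with assms(1) show ?thesis unfolding Hoelder_class_def
    by (smt (verit) abs_le_D2)
qed

lemma enlarged_cbox_in_A_rect:
  "\<forall>i. a$i \<le> b$i \<Longrightarrow> 0 \<le> \<delta> \<Longrightarrow> cbox (\<chi> i. a$i - \<delta>) (\<chi> i. b$i + \<delta>) \<in> A_rect"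
  unfolding A_rect_def
  by (intro CollectI exI[of _ "\<chi> i. a$i - \<delta>"] exI[of _ "\<chi> i. b$i + \<delta>"]) (auto, smt (verit))

lemma enlarged_cbox_near_cbox:
  assumes "\<forall>i. a$i \<le> b$i" "0 \<le> \<delta>" "y \<in> cbox (\<chi> i. a$i - \<delta>) (\<chi> i. b$i + \<delta>)"
  obtains z where "z \<in> cbox a b" "linf_dist y z \<le> \<delta>"
proof
  let ?z = "\<chi> i. max (a$i) (min (b$i) (y$i))"
  show "?z \<in> cbox a b" using assms(1) by (auto simp: mem_box_cart)
  show "linf_dist y ?z \<le> \<delta>"
    using assms unfolding linf_dist_le_iff
    by (auto simp: mem_box_cart abs_le_iff max_def min_def) (smt (verit))+
qed

lemma corner_ball_disjoint_cbox:
  "ball_inf (\<chi> i. a$i - r) r \<inter> cbox a b = {}"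
  by (auto simp: ball_inf_def linf_dist_less_iff mem_box_cart abs_less_iff) (meson not_le)

lemma corner_ball_subset_enlarged_cbox:
  assumes "\<forall>i. a$i \<le> b$i"
  shows "ball_inf (\<chi> i. a$i - r) r \<subseteq> cbox (\<chi> i. a$i - 2 * r) (\<chi> i. b$i + 2 * r)"
  using assms by (auto simp: ball_inf_def linf_dist_less_iff mem_box_cart abs_less_iff;
      smt (verit))

lemma emeasure_le_rect_sup: "A \<in> A_rect \<Longrightarrow> A \<subseteq> S \<Longrightarrow> emeasure \<mu> A \<le> rect_sup \<mu> S"
  unfolding rect_sup_def by (rule Sup_upper) blast

lemma rect_sup_le_emeasure_space: "rect_sup \<mu> S \<le> emeasure \<mu> (space \<mu>)"
  unfolding rect_sup_def by (rule Sup_least) (auto intro: emeasure_space)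

lemma powr_exponent_le_of_bound:
  fixes K \<delta>\<^sub>0 p q :: real
  assumes "0 < K" "0 < \<delta>\<^sub>0" and bound: "\<And>\<delta>. 0 < \<delta> \<Longrightarrow> \<delta> \<le> \<delta>\<^sub>0 \<Longrightarrow> K * \<delta> powr p \<le> \<delta> powr q"
  shows "q \<le> p"
proof (rule ccontr)
  assume "\<not> q \<le> p"
  define \<delta> where "\<delta> = min \<delta>\<^sub>0 ((K / 2) powr (1 / (q - p)))"
  have \<delta>: "0 < \<delta>" "\<delta> \<le> \<delta>\<^sub>0"
    using assms(1,2) by (auto simp: \<delta>_def)
  have "\<delta> powr (q - p) \<le> ((K / 2) powr (1 / (q - p))) powr (q - p)"
    using \<delta> \<open>\<not> q \<le> p\<close> by (intro powr_mono2) (auto simp: \<delta>_def)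
  also have "\<dots> = K / 2"
    using assms(1) \<open>\<not> q \<le> p\<close> by (simp add: powr_powr)
  finally have small: "\<delta> powr (q - p) \<le> K / 2" .
  have "K * \<delta> powr p \<le> \<delta> powr p * \<delta> powr (q - p)"
    using bound[OF \<delta>] \<delta>(1) by (simp add: powr_add[symmetric])
  also have "\<dots> \<le> \<delta> powr p * (K / 2)"
    using small by (intro mult_left_mono) auto
  finally have "\<delta> powr p * K \<le> \<delta> powr p * (K / 2)"
    by (simp add: mult.commute)
  then have "K \<le> K / 2"
    by (rule mult_left_le_imp_le) (use \<delta>(1) in simp)
  with assms(1) show False by simp
qed

locale continuous_density = finite_measure \<mu>
  for \<mu> :: "(real^'d) measure" +
  fixes f :: "real^'d \<Rightarrow> real"
  assumes \<mu>_eq_density: "\<mu> = density lborel (\<lambda>x. ennreal (f x))"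
    and continuous_f: "continuous_on UNIV f"
    and f_nonneg: "\<And>x. 0 \<le> f x"
begin

lemma sets_\<mu>: "sets \<mu> = sets borel"
  by (simp add: \<mu>_eq_density)

lemma ennreal_f_measurable: "(\<lambda>x. ennreal (f x)) \<in> borel_measurable lborel"
proof -
  have "f \<in> borel_measurable borel"
    using continuous_f by (rule borel_measurable_continuous_onI)
  then show ?thesis by simp
qed

lemma density_pos_in_set:
  assumes "U \<in> sets borel" "0 < measure \<mu> U"
  shows "\<exists>x\<in>U. 0 < f x"
proof (rule ccontr)
  assume "\<not> ?thesis"
  then have "(\<lambda>x. ennreal (f x) * indicator U x) = (\<lambda>x. 0)"
    by (auto simp: fun_eq_iff indicator_def not_less ennreal_eq_0_iff)
  then have "emeasure \<mu> U = 0"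
    unfolding \<mu>_eq_density using assms(1)
    by (subst emeasure_density[OF ennreal_f_measurable]) simp_all
  with assms(2) show False by (simp add: measure_def)
qed

lemma measure_cball_inf_le:
  assumes "\<forall>y\<in>cball_inf a \<rho>. f y \<le> S" "0 \<le> S" "0 \<le> \<rho>"
  shows "measure \<mu> (cball_inf a \<rho>) \<le> S * (2 * \<rho>) ^ CARD('d)"
proof -
  let ?B = "cball_inf a \<rho>"
  have B: "?B \<in> sets borel" unfolding cball_inf_eq_cbox by simp
  have "emeasure \<mu> ?B = (\<integral>\<^sup>+ x. ennreal (f x) * indicator ?B x \<partial>lborel)"
    unfolding \<mu>_eq_density using B by (simp add: emeasure_density[OF ennreal_f_measurable])
  also have "\<dots> \<le> (\<integral>\<^sup>+ x. ennreal S * indicator ?B x \<partial>lborel)"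
    using assms(1) by (intro nn_integral_mono) (auto simp: indicator_def intro: ennreal_leI)
  also have "\<dots> = ennreal S * emeasure lborel ?B"
    using B by (simp add: nn_integral_cmult_indicator)
  also have "emeasure lborel ?B = ennreal ((2 * \<rho>) ^ CARD('d))"
    using measure_lborel_cball_inf[OF assms(3), of a]
    unfolding cball_inf_eq_cbox by (simp add: emeasure_eq_measure2 emeasure_lborel_cbox_finite)
  finally have "emeasure \<mu> ?B \<le> ennreal (S * (2 * \<rho>) ^ CARD('d))"
    using assms(2,3) by (simp add: ennreal_mult)
  then show ?thesis
    using assms(2,3) by (simp add: emeasure_eq_measure ennreal_le_iff)
qed

lemma lower_density_le:
  assumes "\<forall>y\<in>cball_inf a \<rho>. f y \<le> S" "0 < \<rho>" "\<rho> < 1"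
  shows "lower_density \<mu> a \<le> 2 ^ CARD('d) * S"
proof -
  have "a \<in> cball_inf a \<rho>"
    using assms(2) by (simp add: cball_inf_def linf_dist_le_iff)
  with assms(1) f_nonneg have "0 \<le> S" by (meson order_trans)
  have "lower_density \<mu> a \<le> measure \<mu> (cball_inf a \<rho>) / \<rho> ^ CARD('d)"
    unfolding lower_density_def using assms(2,3)
    by (intro cINF_lower bdd_belowI[of _ 0]) auto
  also have "\<dots> \<le> 2 ^ CARD('d) * S"
    using measure_cball_inf_le[OF assms(1) \<open>0 \<le> S\<close>] assms(2)
    by (simp add: pos_divide_le_eq power_mult_distrib mult_ac)
  finally show ?thesis .
qed

lemma bdd_above_image_ball_inf: "bdd_above (f ` ball_inf c R)"
proof -
  have "compact (f ` cball_inf c R)"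
    unfolding cball_inf_eq_cbox
    by (rule compact_continuous_image[OF continuous_on_subset[OF continuous_f]]) auto
  then have "bdd_above (f ` cball_inf c R)"
    by (auto intro: bounded_imp_bdd_above compact_imp_bounded)
  then show ?thesis
    by (rule bdd_above_mono) (intro image_mono ball_inf_subset_cball_inf)
qed

text \<open>The \<upsilon> r/2-ball around a lies in the (1+\<upsilon>) r-ball around c, so the supremum of the
  density in the definition of R_\<upsilon> dominates the lower density at a.\<close>

lemma R_set_ball_measure_ge:
  assumes "c \<in> R_set \<upsilon> \<mu> f" "0 < \<upsilon>" "\<upsilon> < 1" "0 < r" "r < 1" "linf_dist c a \<le> r"
  shows "\<upsilon> * r ^ CARD('d) * lower_density \<mu> a / 2 ^ CARD('d) \<le> measure \<mu> (ball_inf c r)"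
proof -
  define S where "S = (SUP y\<in>ball_inf c ((1 + \<upsilon>) * r). f y)"
  have "0 < \<upsilon> * r" "\<upsilon> * r < 1"
    using assms(2-5) mult_strict_mono[of \<upsilon> 1 r 1] by auto
  have "cball_inf a (\<upsilon> * r / 2) \<subseteq> ball_inf c ((1 + \<upsilon>) * r)"
  proof
    fix y assume "y \<in> cball_inf a (\<upsilon> * r / 2)"
    then have ay: "\<bar>a$i - y$i\<bar> \<le> \<upsilon> * r / 2" for i
      unfolding cball_inf_def mem_Collect_eq linf_dist_le_iff by blast
    have ca: "\<bar>c$i - a$i\<bar> \<le> r" for i
      using assms(6) by (simp add: linf_dist_le_iff)
    have "\<bar>c$i - y$i\<bar> < r + \<upsilon> * r" for i
      using ay[of i] ca[of i] \<open>0 < \<upsilon> * r\<close> by linarith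
    then show "y \<in> ball_inf c ((1 + \<upsilon>) * r)"
      by (simp add: ball_inf_def linf_dist_less_iff algebra_simps)
  qed
  then have "\<forall>y\<in>cball_inf a (\<upsilon> * r / 2). f y \<le> S"
    unfolding S_def using bdd_above_image_ball_inf by (auto intro: cSUP_upper)
  then have "lower_density \<mu> a \<le> 2 ^ CARD('d) * S"
    using \<open>0 < \<upsilon> * r\<close> \<open>\<upsilon> * r < 1\<close> by (intro lower_density_le[of a "\<upsilon> * r / 2"]) auto
  then have "\<upsilon> * r ^ CARD('d) * lower_density \<mu> a / 2 ^ CARD('d)
      \<le> \<upsilon> * r ^ CARD('d) * (2 ^ CARD('d) * S) / 2 ^ CARD('d)"
    using assms(2,4) by (intro divide_right_mono mult_left_mono) auto
  also have "\<dots> = \<upsilon> * r ^ CARD('d) * S"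
    by simp
  also have "\<dots> \<le> measure \<mu> (ball_inf c r)"
    using assms(1,4,5) unfolding R_set_def S_def by auto
  finally show ?thesis .
qed

lemma rect_sup_neq_top: "rect_sup \<mu> S \<noteq> \<top>"
  using rect_sup_le_emeasure_space[of \<mu> S] emeasure_finite[of "space \<mu>"]
  by (auto simp: top_unique)

lemma measure_cbox_add_corner_ball_le:
  assumes "\<forall>i. a$i \<le> b$i" "0 < \<delta>"
  shows "measure \<mu> (cbox a b) + measure \<mu> (ball_inf (\<chi> i. a$i - \<delta> / 2) (\<delta> / 2))
    \<le> measure \<mu> (cbox (\<chi> i. a$i - \<delta>) (\<chi> i. b$i + \<delta>))"
proof -
  let ?A = "cbox a b" and ?B = "ball_inf (\<chi> i. a$i - \<delta> / 2) (\<delta> / 2)"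
    and ?A' = "cbox (\<chi> i. a$i - \<delta>) (\<chi> i. b$i + \<delta>)"
  have "?A \<subseteq> ?A'"
    using assms(2) by (auto simp: mem_box_cart) (smt (verit))+
  moreover have "?B \<subseteq> ?A'"
    using corner_ball_subset_enlarged_cbox[OF assms(1), of "\<delta> / 2"] by simp
  moreover have "?A \<inter> ?B = {}"
    using corner_ball_disjoint_cbox[of a "\<delta> / 2" b] by (simp add: Int_commute)
  then have "measure \<mu> ?A + measure \<mu> ?B = measure \<mu> (?A \<union> ?B)"
    by (intro finite_measure_Union[symmetric]) (auto simp: sets_\<mu> ball_inf_eq_box)
  ultimately show ?thesis
    using finite_measure_mono[of "?A \<union> ?B" ?A'] by (simp add: sets_\<mu>)
qed

end

locale threshold_regularity = continuous_density \<mu> f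
  for \<mu> :: "(real^'d) measure" and f +
  fixes \<eta> :: "real^'d \<Rightarrow> real" and \<tau> \<beta> C_S \<upsilon> :: real
  assumes hoelder: "Hoelder_class \<beta> C_S \<eta>"
    and \<beta>_pos: "0 < \<beta>" and C_S_pos: "0 < C_S"
    and \<upsilon>_pos: "0 < \<upsilon>" and \<upsilon>_less_1: "\<upsilon> < 1"
    and superlevel_subset_R_set: "superlevel \<eta> \<tau> \<subseteq> R_set \<upsilon> \<mu> f"
begin

lemma hoelder_lower_bound: "linf_dist y z \<le> \<delta> \<Longrightarrow> \<eta> z - C_S * \<delta> powr \<beta> \<le> \<eta> y"
  using Hoelder_class_lower_bound[OF hoelder] \<beta>_pos C_S_pos by simp

lemma cball_inf_subset_superlevel:
  assumes "\<tau> < \<eta> x"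
  obtains r where "0 < r" "r < 1" "cball_inf x r \<subseteq> superlevel \<eta> \<tau>"
proof -
  define r where "r = min (1/2) (((\<eta> x - \<tau>) / C_S) powr (1 / \<beta>))"
  have r: "0 < r" "r < 1"
    using assms C_S_pos by (auto simp: r_def)
  have "r powr \<beta> \<le> (((\<eta> x - \<tau>) / C_S) powr (1 / \<beta>)) powr \<beta>"
    using r \<beta>_pos by (intro powr_mono2) (auto simp: r_def)
  also have "\<dots> = (\<eta> x - \<tau>) / C_S"
    using assms \<beta>_pos C_S_pos by (simp add: powr_powr)
  finally have "C_S * r powr \<beta> \<le> \<eta> x - \<tau>"
    using C_S_pos by (simp add: field_simps)
  then have "cball_inf x r \<subseteq> superlevel \<eta> \<tau>"
    using hoelder_lower_bound[of _ x r]
    by (force simp: cball_inf_def superlevel_def linf_dist_commute)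
  with r show ?thesis by (rule that)
qed

lemma M_tau_pos:
  assumes "U \<in> sets borel" "0 < measure \<mu> U" "U \<subseteq> {x. \<tau> < \<eta> x}"
  shows "0 < M_tau \<mu> \<eta> \<tau>"
proof -
  obtain x where x: "x \<in> U" "0 < f x"
    using density_pos_in_set[OF assms(1,2)] by blast
  with assms(3) have "\<tau> < \<eta> x" by auto
  then obtain r where r: "0 < r" "r < 1" "cball_inf x r \<subseteq> superlevel \<eta> \<tau>"
    by (rule cball_inf_subset_superlevel)
  have "x \<in> R_set \<upsilon> \<mu> f"
    using superlevel_subset_R_set \<open>\<tau> < \<eta> x\<close> by (auto simp: superlevel_def)
  have "x \<in> ball_inf x ((1 + \<upsilon>) * r)"
    using r \<upsilon>_pos by (simp add: ball_inf_def linf_dist_less_iff)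
  then have "f x \<le> (SUP y\<in>ball_inf x ((1 + \<upsilon>) * r). f y)"
    by (rule cSUP_upper[OF _ bdd_above_image_ball_inf])
  then have "\<upsilon> * r ^ CARD('d) * f x \<le> \<upsilon> * r ^ CARD('d) * (SUP y\<in>ball_inf x ((1 + \<upsilon>) * r). f y)"
    using \<upsilon>_pos r by (intro mult_left_mono) auto
  also have "\<dots> \<le> measure \<mu> (ball_inf x r)"
    using \<open>x \<in> R_set \<upsilon> \<mu> f\<close> r unfolding R_set_def by auto
  also have "\<dots> \<le> measure \<mu> (cball_inf x r)"
    by (rule finite_measure_mono[OF ball_inf_subset_cball_inf]) (simp add: sets_\<mu> cball_inf_eq_cbox)
  finally have "\<upsilon> * r ^ CARD('d) * f x \<le> measure \<mu> (cball_inf x r)" .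
  moreover have "0 < \<upsilon> * r ^ CARD('d) * f x"
    using \<upsilon>_pos r x by simp
  ultimately have "0 < emeasure \<mu> (cball_inf x r)"
    by (simp add: emeasure_eq_measure)
  also have "\<dots> \<le> M_tau \<mu> \<eta> \<tau>"
    unfolding M_tau_def using r by (intro emeasure_le_rect_sup cball_inf_in_A_rect) auto
  finally show ?thesis .
qed


lemma enlarged_cbox_subset_superlevel:
  assumes "\<forall>i. a$i \<le> b$i" "0 \<le> \<delta>" "cbox a b \<subseteq> superlevel \<eta> (\<tau> + C_S * \<delta> powr \<beta>)"
  shows "cbox (\<chi> i. a$i - \<delta>) (\<chi> i. b$i + \<delta>) \<subseteq> superlevel \<eta> \<tau>"
proof
  fix y assume "y \<in> cbox (\<chi> i. a$i - \<delta>) (\<chi> i. b$i + \<delta>)"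
  then obtain z where "z \<in> cbox a b" "linf_dist y z \<le> \<delta>"
    by (rule enlarged_cbox_near_cbox[OF assms(1,2)])
  with assms(3) hoelder_lower_bound[of y z \<delta>] show "y \<in> superlevel \<eta> \<tau>"
    by (auto simp: superlevel_def)
qed

lemma measure_rect_plus_gap_le_M_tau:
  assumes "A \<in> A_rect"
    and A_sub: "A \<subseteq> superlevel (lower_density \<mu>) \<xi> \<inter> superlevel \<eta> (\<tau> + C_S * \<delta> powr \<beta>)"
    and "0 < \<delta>" "\<delta> < 2"
  shows "ennreal (measure \<mu> A + \<upsilon> * (\<delta> / 2) ^ CARD('d) * \<xi> / 2 ^ CARD('d))
    \<le> M_tau \<mu> \<eta> \<tau>"
proof -
  obtain a b where ab: "A = cbox a b" "\<forall>i. a$i \<le> b$i"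
    using assms(1) unfolding A_rect_def by blast
  define c where "c = (\<chi> i. a$i - \<delta> / 2)"
  define A' where "A' = cbox (\<chi> i. a$i - \<delta>) (\<chi> i. b$i + \<delta>)"
  have A'_sub: "A' \<subseteq> superlevel \<eta> \<tau>"
    unfolding A'_def using ab A_sub assms(3) by (intro enlarged_cbox_subset_superlevel) auto
  have "c \<in> A'"
    using corner_ball_subset_enlarged_cbox[OF ab(2), of "\<delta> / 2"] assms(3)
    by (auto simp: A'_def c_def ball_inf_def)
  with A'_sub superlevel_subset_R_set have "c \<in> R_set \<upsilon> \<mu> f"
    by blast
  have "linf_dist c a \<le> \<delta> / 2"
    unfolding linf_dist_le_iff c_def using assms(3) by simp
  have "a \<in> A"
    using ab by (simp add: mem_box_cart)
  with A_sub have "\<xi> \<le> lower_density \<mu> a"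
    by (auto simp: superlevel_def)
  then have "\<upsilon> * (\<delta> / 2) ^ CARD('d) * \<xi> / 2 ^ CARD('d)
      \<le> \<upsilon> * (\<delta> / 2) ^ CARD('d) * lower_density \<mu> a / 2 ^ CARD('d)"
    using \<upsilon>_pos assms(3) by (intro divide_right_mono mult_left_mono) auto
  also have "\<dots> \<le> measure \<mu> (ball_inf c (\<delta> / 2))"
    using \<open>c \<in> R_set \<upsilon> \<mu> f\<close> \<upsilon>_pos \<upsilon>_less_1 assms(3,4) \<open>linf_dist c a \<le> \<delta> / 2\<close>
    by (intro R_set_ball_measure_ge) auto
  finally have "measure \<mu> A + \<upsilon> * (\<delta> / 2) ^ CARD('d) * \<xi> / 2 ^ CARD('d) \<le> measure \<mu> A'"
    using measure_cbox_add_corner_ball_le[OF ab(2) assms(3)] unfolding ab(1) A'_def c_def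
    by linarith
  then have "ennreal (measure \<mu> A + \<upsilon> * (\<delta> / 2) ^ CARD('d) * \<xi> / 2 ^ CARD('d))
      \<le> emeasure \<mu> A'"
    by (simp add: emeasure_eq_measure)
  also have "\<dots> \<le> M_tau \<mu> \<eta> \<tau>"
    unfolding M_tau_def A'_def using ab(2) assms(3) A'_sub
    by (intro emeasure_le_rect_sup enlarged_cbox_in_A_rect) (auto simp: A'_def)
  finally show ?thesis .
qed

lemma App_class_gap_le:
  assumes "App_class \<mu> \<eta> \<tau> \<kappa> \<gamma> C_App" "M_tau \<mu> \<eta> \<tau> = ennreal m"
    and "0 < \<delta>" "\<delta> < 2" "0 < \<xi>" "0 \<le> C_App"
    and small: "C_App * (\<xi> powr \<kappa> + (C_S * \<delta> powr \<beta>) powr \<gamma>) < m"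
  shows "\<upsilon> * (\<delta> / 2) ^ CARD('d) * \<xi> / 2 ^ CARD('d) \<le> C_App * (\<xi> powr \<kappa> + (C_S * \<delta> powr \<beta>) powr \<gamma>)"
proof -
  define gap where "gap = \<upsilon> * (\<delta> / 2) ^ CARD('d) * \<xi> / 2 ^ CARD('d)"
  define err where "err = C_App * (\<xi> powr \<kappa> + (C_S * \<delta> powr \<beta>) powr \<gamma>)"
  let ?S = "superlevel (lower_density \<mu>) \<xi> \<inter> superlevel \<eta> (\<tau> + C_S * \<delta> powr \<beta>)"
  have "0 \<le> err"
    using assms(6) by (simp add: err_def)
  with small have "0 < m - err"
    by (simp add: err_def)
  have "rect_sup \<mu> ?S \<le> ennreal (m - gap)"
    unfolding rect_sup_def
  proof (rule Sup_least)
    fix e assume "e \<in> {emeasure \<mu> A |A. A \<in> A_rect \<and> A \<subseteq> ?S}"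
    then obtain A where A: "e = emeasure \<mu> A" "A \<in> A_rect" "A \<subseteq> ?S"
      by blast
    from measure_rect_plus_gap_le_M_tau[OF A(2,3) assms(3,4)] assms(2) \<open>0 < m - err\<close> \<open>0 \<le> err\<close>
    have "measure \<mu> A \<le> m - gap"
      by (simp add: gap_def)
    then show "e \<le> ennreal (m - gap)"
      by (simp add: A(1) emeasure_eq_measure ennreal_leI)
  qed
  moreover have "M_tau \<mu> \<eta> \<tau> - ennreal err \<le> rect_sup \<mu> ?S"
    using assms(1,3,5) C_S_pos unfolding App_class_def err_def by simp
  ultimately have "ennreal (m - err) \<le> ennreal (m - gap)"
    using assms(2) \<open>0 \<le> err\<close> by (simp add: ennreal_minus)
  with \<open>0 < m - err\<close> show ?thesis
    unfolding gap_def err_def by (simp add: ennreal_le_iff2)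
qed

lemma App_class_power_bound:
  assumes "App_class \<mu> \<eta> \<tau> \<kappa> \<gamma> C_App" "M_tau \<mu> \<eta> \<tau> = ennreal m" "0 < \<kappa>" "0 \<le> C_App"
    and "0 < \<delta>" "\<delta> < 2" and small: "2 * C_App * C_S powr \<gamma> * \<delta> powr (\<beta> * \<gamma>) < m"
  shows "\<upsilon> * C_S powr (\<gamma> / \<kappa>) / 4 ^ CARD('d) * \<delta> powr (real CARD('d) + \<beta> * \<gamma> / \<kappa>)
    \<le> 2 * C_App * C_S powr \<gamma> * \<delta> powr (\<beta> * \<gamma>)"
proof -
  \<comment> \<open>The density threshold \<xi> balances the two error terms: \<xi>^\<kappa> = \<Delta>^\<gamma> for \<Delta> = C_S \<delta>^\<beta>.\<close>
  define \<xi> where "\<xi> = (C_S * \<delta> powr \<beta>) powr (\<gamma> / \<kappa>)"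
  have \<xi>: "\<xi> = C_S powr (\<gamma> / \<kappa>) * \<delta> powr (\<beta> * \<gamma> / \<kappa>)"
    using C_S_pos assms(5) by (simp add: \<xi>_def powr_mult powr_powr)
  have "(C_S * \<delta> powr \<beta>) powr \<gamma> = C_S powr \<gamma> * \<delta> powr (\<beta> * \<gamma>)"
    using C_S_pos assms(5) by (simp add: powr_mult powr_powr)
  moreover have "\<xi> powr \<kappa> = (C_S * \<delta> powr \<beta>) powr \<gamma>"
    using assms(3) by (simp add: \<xi>_def powr_powr)
  ultimately have err: "C_App * (\<xi> powr \<kappa> + (C_S * \<delta> powr \<beta>) powr \<gamma>)
      = 2 * C_App * C_S powr \<gamma> * \<delta> powr (\<beta> * \<gamma>)"
    by simp
  have "\<delta> powr (real CARD('d) + \<beta> * \<gamma> / \<kappa>) = \<delta> ^ CARD('d) * \<delta> powr (\<beta> * \<gamma> / \<kappa>)"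
    using assms(5) by (simp add: powr_add powr_realpow)
  moreover have "(4::real) ^ CARD('d) = 2 ^ CARD('d) * 2 ^ CARD('d)"
    by (simp add: power_mult_distrib[symmetric])
  ultimately have gap: "\<upsilon> * (\<delta> / 2) ^ CARD('d) * \<xi> / 2 ^ CARD('d)
      = \<upsilon> * C_S powr (\<gamma> / \<kappa>) / 4 ^ CARD('d) * \<delta> powr (real CARD('d) + \<beta> * \<gamma> / \<kappa>)"
    by (simp add: \<xi> power_divide)
  have "0 < \<xi>"
    using C_S_pos assms(5) by (simp add: \<xi>_def)
  from App_class_gap_le[OF assms(1,2,5,6) this assms(4)] small show ?thesis
    unfolding err gap by blast
qed

lemma App_class_exponent_bound:
  assumes "App_class \<mu> \<eta> \<tau> \<kappa> \<gamma> C_App" "0 < M_tau \<mu> \<eta> \<tau>"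
    and "0 < \<kappa>" "0 < \<gamma>" "0 < C_App"
  shows "\<beta> * \<gamma> \<le> real CARD('d) + \<beta> * \<gamma> / \<kappa>"
proof -
  define m where "m = enn2real (M_tau \<mu> \<eta> \<tau>)"
  have M: "M_tau \<mu> \<eta> \<tau> = ennreal m" and "0 < m"
    using assms(2) rect_sup_neq_top[of "superlevel \<eta> \<tau>"]
    by (auto simp: m_def M_tau_def enn2real_positive_iff less_top)
  define C where "C = 2 * C_App * C_S powr \<gamma>"
  define K where "K = \<upsilon> * C_S powr (\<gamma> / \<kappa>) / (4 ^ CARD('d) * C)"
  define \<delta>\<^sub>0 where "\<delta>\<^sub>0 = min 1 ((m / (2 * C)) powr (1 / (\<beta> * \<gamma>)))"
  have "0 < C"
    using assms(5) C_S_pos by (simp add: C_def)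
  show ?thesis
  proof (rule powr_exponent_le_of_bound)
    show "0 < K" "0 < \<delta>\<^sub>0"
      using \<upsilon>_pos C_S_pos \<open>0 < C\<close> \<open>0 < m\<close> by (simp_all add: K_def \<delta>\<^sub>0_def)
    fix \<delta> :: real assume "0 < \<delta>" "\<delta> \<le> \<delta>\<^sub>0"
    have "\<delta> powr (\<beta> * \<gamma>) \<le> ((m / (2 * C)) powr (1 / (\<beta> * \<gamma>))) powr (\<beta> * \<gamma>)"
      using \<open>0 < \<delta>\<close> \<open>\<delta> \<le> \<delta>\<^sub>0\<close> \<beta>_pos assms(4) by (intro powr_mono2) (auto simp: \<delta>\<^sub>0_def)
    also have "\<dots> = m / (2 * C)"
      using \<beta>_pos assms(4) \<open>0 < m\<close> \<open>0 < C\<close> by (simp add: powr_powr)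
    finally have "C * \<delta> powr (\<beta> * \<gamma>) < m"
      using \<open>0 < m\<close> \<open>0 < C\<close> by (simp add: field_simps)
    moreover have "\<delta> < 2"
      using \<open>\<delta> \<le> \<delta>\<^sub>0\<close> by (simp add: \<delta>\<^sub>0_def)
    ultimately have "K * C * \<delta> powr (real CARD('d) + \<beta> * \<gamma> / \<kappa>) \<le> C * \<delta> powr (\<beta> * \<gamma>)"
      using App_class_power_bound[OF assms(1) M assms(3) _ \<open>0 < \<delta>\<close>] assms(5) \<open>0 < C\<close>
      by (simp add: K_def C_def)
    then show "K * \<delta> powr (real CARD('d) + \<beta> * \<gamma> / \<kappa>) \<le> \<delta> powr (\<beta> * \<gamma>)"
      using \<open>0 < C\<close> by (simp add: mult.commute[of K] mult.assoc)
  qed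
qed

end

theorem mainTheorem18:
  fixes P :: "((real^'d) \<times> real) measure"
    and \<eta> f\<mu> :: "real^'d \<Rightarrow> real"
    and \<tau> \<beta> \<gamma> \<kappa> \<upsilon> C_S C_App :: real
  assumes "0 < \<tau>" "\<tau> < 1"
    and "0 < \<beta>" "\<beta> \<le> 1" "0 < \<gamma>" "0 < \<kappa>" "0 < \<upsilon>" "\<upsilon> < 1"
    and "1 \<le> C_S" "1 \<le> C_App"
    and "prob_space P" "sets P = sets borel"
    and "AE p in P. snd p \<in> {0..1}"
    and "is_regression_function P \<eta>"
    and "continuous_on UNIV f\<mu>" "\<forall>x. 0 \<le> f\<mu> x"
    and "distr P borel fst = density lborel (\<lambda>x. ennreal (f\<mu> x))"
    and "Hoelder_class \<beta> C_S \<eta>"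
    and "App_class (distr P borel fst) \<eta> \<tau> \<kappa> \<gamma> C_App"
    and "superlevel \<eta> \<tau> \<subseteq> R_set \<upsilon> (distr P borel fst) f\<mu>"
    and "measure (distr P borel fst) (\<eta> -` {\<tau><..1}) > 0"
    and "\<eta> -` {\<tau>} \<noteq> {}"
  shows "\<beta> * \<gamma> * (\<kappa> - 1) \<le> real CARD('d) * \<kappa>"
proof -
  have "fst \<in> measurable (borel :: ((real^'d) \<times> real) measure) borel"
    by (intro borel_measurable_continuous_onI continuous_on_fst continuous_on_id)
  then have "fst \<in> measurable P borel"
    by (subst measurable_cong_sets[OF assms(12) refl])
  then have "prob_space (distr P borel fst)"
    by (rule prob_space.prob_space_distr[OF assms(11)])
  then have "finite_measure (distr P borel fst)"
    by (rule prob_space.finite_measure)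
  then interpret threshold_regularity "distr P borel fst" f\<mu> \<eta> \<tau> \<beta> C_S \<upsilon>
    using assms(3,7-9,15-18,20)
    by (intro threshold_regularity.intro continuous_density.intro
        threshold_regularity_axioms.intro continuous_density_axioms.intro) simp_all
  have "\<eta> -` {\<tau><..1} \<in> sets borel"
    using assms(14) unfolding is_regression_function_def by (auto intro: measurable_sets_borel)
  then have "0 < M_tau (distr P borel fst) \<eta> \<tau>"
    using assms(21) by (rule M_tau_pos) (simp add: subset_eq)
  then have "\<beta> * \<gamma> \<le> real CARD('d) + \<beta> * \<gamma> / \<kappa>"
    using App_class_exponent_bound[OF assms(19)] assms(5,6,10) by linarith
  then have "\<beta> * \<gamma> * \<kappa> \<le> (real CARD('d) + \<beta> * \<gamma> / \<kappa>) * \<kappa>"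
    using assms(6) by (intro mult_right_mono) auto
  with assms(6) show ?thesis
    by (simp add: algebra_simps)
qed

end
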